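(* Let $\sigma$ be any of the softmax, softmax-1 or Bayes-softmax activations and consider the gradient flow $\partial_\tau m=-\nabla_m\tilde{\mathcal E}_\sigma$, $\partial_\tau r=-\nabla_r\tilde{\mathcal E}_\sigma$, $\partial_\tau b=-\nabla_b\tilde{\mathcal E}_\sigma$, $\partial_\tau v=-\nabla_v\tilde{\mathcal E}_\sigma$ on the reparameterized loss $\tilde{\mathcal E}_\sigma(m,r,b,v)$. Let the unspecialized manifold $\mathcal M_{\mathrm u}$ be the set of $(m,r,b)$ with $m=\mathbf 1_H\tilde m^\top$ for some $\tilde m\in\mathbb R^F$, $r=\tilde r_1I_H+\tilde r_2\mathbf 1_H\mathbf 1_H^\top$ with $\tilde r_1>0$, $\tilde r_1+H\tilde r_2>0$, and $b=\tilde b\mathbf 1_H$ with $\tilde b\in\mathbb R$. Then $\mathcal M_{\mathrm u}$ is invariant under this gradient flow.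
   Context: Fix integers $L,H,F\ge1$ and a distribution $P_\theta$ on $\mathbb R^F$. $\mathbf 1_H$ is the all-ones vector. For $m\in\mathbb R^{H\times F}$, $r$ symmetric positive semidefinite $H\times H$, $b\in\mathbb R^H$, $v\in\mathbb R$: $\tilde{\mathcal E}_\sigma(m,r,b,v)=\mathbb E\big[\sum_{\ell=1}^L(\delta_{\ell,\epsilon}-\frac1H\sum_{h=1}^H\sigma(\chi,b,v;h)_\ell)^2\big]$, $\chi_{h\ell}=\sum_fm_{hf}\chi^*_{f\ell}+\sum_{h'}r_{hh'}\xi_{h'\ell}$, with $\epsilon\sim\mathrm{Unif}(\{1,\dots,L\})$, $\theta\sim P_\theta$, and conditionally independent $\chi^*_{:\ell}\sim\mathcal N(\delta_{\ell,\epsilon}\theta,I_F)$, $\xi_{:\ell}\sim\mathcal N(0,I_H)$. Activations: softmax $\sigma(\chi,b,v;h)_\ell=e^{\chi_{h\ell}}/\sum_{\ell'}e^{\chi_{h\ell'}}$; softmax-1 $v e^{\chi_{h\ell}}/(e^{b_h}+\sum_{\ell'}e^{\chi_{h\ell'}})$; Bayes-softmax $e^{\chi_{h\ell}+b_h}/(\frac1H\sum_{h'}\sum_{\ell'}e^{\chi_{h'\ell'}+b_{h'}})$. *)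

theory Defs
  imports "HOL-Probability.Probability"
begin

text \<open>Index types: 'l = positions (L = CARD('l)), 'h = heads (H = CARD('h)),
  'f = features (F = CARD('f)).  Finite types are nonempty, so L,H,F \<ge> 1.\<close>

definition std_gauss :: "'a::euclidean_space measure" where
  "std_gauss = density lborel (\<lambda>x. ennreal (\<Prod>b\<in>Basis. std_normal_density (x \<bullet> b)))"

datatype activation = Softmax | Softmax1 | BayesSoftmax

definition act_fun ::
  "activation \<Rightarrow> real^'l^'h \<Rightarrow> real^'h \<Rightarrow> real \<Rightarrow> 'h::finite \<Rightarrow> 'l::finite \<Rightarrow> real" where
  "act_fun a chi b v h l = (case a of
      Softmax \<Rightarrow> exp (chi$h$l) / (\<Sum>l'\<in>UNIV. exp (chi$h$l'))
    | Softmax1 \<Rightarrow> v * exp (chi$h$l) / (exp (b$h) + (\<Sum>l'\<in>UNIV. exp (chi$h$l')))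
    | BayesSoftmax \<Rightarrow> exp (chi$h$l + b$h) /
          ((1 / real CARD('h)) * (\<Sum>h'\<in>UNIV. \<Sum>l'\<in>UNIV. exp (chi$h'$l' + b$h'))))"

definition sample_loss ::
  "activation \<Rightarrow> real^'f^'h \<Rightarrow> real^'h^'h \<Rightarrow> real^'h \<Rightarrow> real \<Rightarrow> 'l \<Rightarrow>
     real^'l^'f \<Rightarrow> real^'l^'h \<Rightarrow> real" where
  "sample_loss a m r b v eps chistar xi =
     (let chi = m ** chistar + r ** xi in
      \<Sum>l\<in>UNIV. ((if l = eps then 1 else 0)
                  - (1 / real CARD('h::finite)) * (\<Sum>h\<in>UNIV. act_fun a chi b v h (l::'l::finite)))\<^sup>2)"

text \<open>Reparameterized loss: eps ~ Unif('l), theta ~ P, chi*_{:l} = delta_{l,eps} theta + z_{:l}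
  with z ~ N(0,I), xi ~ N(0,I), all independent.\<close>
definition Eloss ::
  "'l::finite itself \<Rightarrow> (real^'f) measure \<Rightarrow> activation \<Rightarrow> real^'f^'h \<Rightarrow> real^'h^'h \<Rightarrow> real^'h \<Rightarrow> real \<Rightarrow> real" where
  "Eloss _ P a m r b v =
     (1 / real CARD('l)) * (\<Sum>eps\<in>(UNIV::'l set).
        LINT theta|P. LINT z|(std_gauss :: (real^'l^'f) measure). LINT xi|(std_gauss :: (real^'l^'h) measure).
          sample_loss a m r b v eps
            (\<chi> f l. z$f$l + (if l = eps then theta$f else 0)) xi)"

definition Eloss_param ::
  "(real^'f) measure \<Rightarrow> activation \<Rightarrow> 'l::finite itself \<Rightarrow>
     (real^'f^'h) \<times> (real^'h^'h) \<times> (real^'h) \<times> real \<Rightarrow> real" where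
  "Eloss_param P a L x = (case x of (m, r, b, v) \<Rightarrow> Eloss L P a m r b v)"

definition unspec_manifold :: "((real^'f^'h::finite) \<times> (real^'h^'h) \<times> (real^'h)) set" where
  "unspec_manifold = {(m, r, b).
     (\<exists>mt::real^'f. \<forall>h. m$h = mt) \<and>
     (\<exists>r1 r2::real. r1 > 0 \<and> r1 + real CARD('h) * r2 > 0 \<and>
         (\<forall>i j. r$i$j = r1 * (if i = j then 1 else 0) + r2)) \<and>
     (\<exists>bt::real. \<forall>h. b$h = bt)}"

end

theory Submission
  imports Defs
begin

text \<open>Every symmetry of the parameter space that is a linear, self-adjoint involution and
  leaves the loss invariant commutes with its gradient; by uniqueness of solutions for the
  locally Lipschitz gradient field, the flow then preserves the fixed-point set of each such
  symmetry, forwards and backwards in time. Because the Gaussian noise \<open>\<xi>\<close> is rotation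
  invariant, two families of symmetries are available: permuting the heads (rows of \<open>m\<close>,
  rows and columns of \<open>r\<close>, entries of \<open>b\<close>), and \<open>r \<mapsto> r Q\<close> for symmetric orthogonal
  \<open>Q\<close>. The points fixed by all head transpositions are exactly those where \<open>m\<close> has equal
  rows, \<open>b\<close> has equal entries and \<open>r = r\<^sub>1 I + r\<^sub>2 \<one>\<one>\<^sup>T\<close>. The two eigenvalues
  \<open>r\<^sub>1 + H r\<^sub>2\<close> and \<open>r\<^sub>1\<close> of such an \<open>r\<close> vanish exactly when \<open>r\<close> is fixed
  by the reflection \<open>I - (2/H) \<one>\<one>\<^sup>T\<close>, respectively by a transposition matrix;
  these fixed sets are never reached from a point outside them, so by continuity both
  eigenvalues stay positive.\<close>

section \<open>Rotation invariance of the standard Gaussian\<close>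

lemma borel_measurable_linear:
  fixes f :: "'a::euclidean_space \<Rightarrow> 'b::euclidean_space"
  assumes "linear f"
  shows "f \<in> borel_measurable borel"
  using assms by (intro borel_measurable_continuous_onI linear_continuous_on) (simp add: linear_conv_bounded_linear)

definition basis_transfer :: "('a::euclidean_space \<Rightarrow> 'b::euclidean_space) \<Rightarrow> 'a \<Rightarrow> 'b" where
  "basis_transfer \<beta> x = (\<Sum>b\<in>Basis. (x \<bullet> b) *\<^sub>R \<beta> b)"

lemma linear_basis_transfer: "linear (basis_transfer \<beta>)"
  unfolding basis_transfer_def[abs_def]
  by (rule linearI) (simp_all add: inner_add_left scaleR_add_left sum.distrib scaleR_sum_right)

lemma inner_basis_transfer:
  assumes \<beta>: "bij_betw \<beta> Basis Basis" and b: "b \<in> Basis"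
  shows "basis_transfer \<beta> x \<bullet> \<beta> b = x \<bullet> b"
proof -
  have "basis_transfer \<beta> x \<bullet> \<beta> b = (\<Sum>b'\<in>Basis. (x \<bullet> b') * (\<beta> b' \<bullet> \<beta> b))"
    by (simp add: basis_transfer_def inner_sum_left)
  also have "\<dots> = (\<Sum>b'\<in>Basis. if b' = b then x \<bullet> b' else 0)"
  proof (rule sum.cong)
    fix b' :: 'a assume b': "b' \<in> Basis"
    then have "\<beta> b' = \<beta> b \<longleftrightarrow> b' = b"
      using \<beta> b by (metis bij_betw_def inj_on_eq_iff)
    with b b' \<beta> show "(x \<bullet> b') * (\<beta> b' \<bullet> \<beta> b) = (if b' = b then x \<bullet> b' else 0)"
      by (auto simp: inner_Basis bij_betwE)
  qed simp
  finally show ?thesis using b by simp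
qed

lemma basis_transfer_inverse:
  assumes \<beta>: "bij_betw \<beta> Basis Basis"
  shows "basis_transfer (inv_into Basis \<beta>) (basis_transfer \<beta> x) = x"
proof (rule euclidean_eqI)
  fix b :: 'a assume b: "b \<in> Basis"
  have \<gamma>: "bij_betw (inv_into Basis \<beta>) Basis Basis" using \<beta> by (rule bij_betw_inv_into)
  have "\<beta> b \<in> Basis" "inv_into Basis \<beta> (\<beta> b) = b"
    using \<beta> b by (auto simp: bij_betwE bij_betw_inv_into_left)
  with inner_basis_transfer[OF \<gamma>] inner_basis_transfer[OF \<beta> b]
  show "basis_transfer (inv_into Basis \<beta>) (basis_transfer \<beta> x) \<bullet> b = x \<bullet> b"
    by metis
qed

lemma inner_basis_transfer_eq:
  assumes \<beta>: "bij_betw \<beta> Basis Basis"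
  shows "basis_transfer \<beta> x \<bullet> basis_transfer \<beta> y = x \<bullet> y"
proof -
  have "basis_transfer \<beta> x \<bullet> basis_transfer \<beta> y
        = (\<Sum>c\<in>Basis. (basis_transfer \<beta> x \<bullet> c) * (basis_transfer \<beta> y \<bullet> c))"
    by (rule euclidean_inner)
  also have "\<dots> = (\<Sum>b\<in>Basis. (basis_transfer \<beta> x \<bullet> \<beta> b) * (basis_transfer \<beta> y \<bullet> \<beta> b))"
    using \<beta> by (simp add: sum.reindex_bij_betw[symmetric, of \<beta>])
  also have "\<dots> = x \<bullet> y"
    by (simp add: inner_basis_transfer[OF \<beta>] euclidean_inner[of x y])
  finally show ?thesis .
qed

lemma norm_basis_transfer:
  assumes "bij_betw \<beta> Basis Basis"
  shows "norm (basis_transfer \<beta> x) = norm x"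
  using inner_basis_transfer_eq[OF assms] by (simp add: norm_eq_sqrt_inner)

lemma lborel_distr_basis_transfer:
  fixes \<beta> :: "'a::euclidean_space \<Rightarrow> 'b::euclidean_space"
  assumes \<beta>: "bij_betw \<beta> Basis Basis"
  shows "distr lborel borel (basis_transfer \<beta>) = lborel"
proof (rule lborel_eqI[symmetric])
  let ?\<psi> = "basis_transfer \<beta>" and ?\<phi> = "basis_transfer (inv_into Basis \<beta>)"
  fix l u :: 'b assume le: "\<And>c. c \<in> Basis \<Longrightarrow> l \<bullet> c \<le> u \<bullet> c"
  have \<gamma>: "bij_betw (inv_into Basis \<beta>) Basis Basis" using \<beta> by (rule bij_betw_inv_into)
  have inv_inner: "?\<phi> w \<bullet> b = w \<bullet> \<beta> b" if "b \<in> Basis" for w b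
    using inner_basis_transfer[OF \<gamma>, of "\<beta> b" w] \<beta> that by (simp add: bij_betwE bij_betw_inv_into_left)
  have \<beta>_Basis: "\<beta> ` Basis = Basis" using \<beta> by (simp add: bij_betw_def)
  have pre: "?\<psi> -` box l u = box (?\<phi> l) (?\<phi> u)"
  proof -
    have "x \<in> ?\<psi> -` box l u \<longleftrightarrow> (\<forall>c\<in>\<beta> ` Basis. l \<bullet> c < ?\<psi> x \<bullet> c \<and> ?\<psi> x \<bullet> c < u \<bullet> c)" for x
      by (simp add: mem_box \<beta>_Basis)
    then show ?thesis
      by (auto simp: mem_box inv_inner inner_basis_transfer[OF \<beta>])
  qed
  have "emeasure (distr lborel borel ?\<psi>) (box l u) = emeasure lborel (box (?\<phi> l) (?\<phi> u))"
    using borel_measurable_linear[OF linear_basis_transfer[of \<beta>]] by (simp add: emeasure_distr pre[symmetric])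
  also have "\<dots> = (\<Prod>b\<in>Basis. (u - l) \<bullet> \<beta> b)"
    using le \<beta> by (simp add: emeasure_lborel_box_eq inner_diff_left inv_inner bij_betwE)
  also have "\<dots> = (\<Prod>c\<in>Basis. (u - l) \<bullet> c)"
    using \<beta> by (simp add: prod.reindex_bij_betw)
  finally show "emeasure (distr lborel borel ?\<psi>) (box l u) = (\<Prod>c\<in>Basis. (u - l) \<bullet> c)" .
qed simp

lemma lborel_distr_orthogonal_vec:
  fixes f :: "real^'n::{finite,wellorder} \<Rightarrow> real^'n::_"
  assumes f: "orthogonal_transformation f"
  shows "distr lborel borel f = lborel"
proof (rule lborel_eqI[symmetric])
  have lin: "linear f" using f by (rule orthogonal_transformation_linear)
  fix l u :: "(real, 'n) vec" assume le: "\<And>b. b \<in> Basis \<Longrightarrow> l \<bullet> b \<le> u \<bullet> b"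
  let ?S = "f -` box l u"
  have S_image: "?S = inv f ` box l u"
    using orthogonal_transformation_bij[OF f] by (simp add: bij_vimage_eq_inv_image)
  have S_open: "open ?S"
    using lin by (intro open_vimage linear_continuous_on) (auto simp: linear_conv_bounded_linear)
  have S_bounded: "bounded ?S" unfolding S_image
    using orthogonal_transformation_inv[OF f]
    by (metis bounded_box bounded_linear_image linear_conv_bounded_linear orthogonal_transformation_linear)
  have "measure lborel ?S = measure lebesgue (inv f ` box l u)"
    using S_open S_image by (simp add: borel_open)
  also have "\<dots> = measure lborel (box l u)"
    using orthogonal_transformation_inv[OF f] by (simp add: measure_orthogonal_image lmeasurable_open)
  finally have "measure lborel ?S = measure lborel (box l u)" .
  moreover have "emeasure lborel ?S \<noteq> \<infinity>" "emeasure lborel (box l u) \<noteq> \<infinity>"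
    using emeasure_bounded_finite[OF S_bounded] emeasure_lborel_box_finite[of l u] by auto
  ultimately have "emeasure lborel ?S = emeasure lborel (box l u)"
    using emeasure_eq_ennreal_measure[of lborel ?S] emeasure_eq_ennreal_measure[of lborel "box l u"]
    by simp
  then show "emeasure (distr lborel borel f) (box l u) = (\<Prod>b\<in>Basis. (u - l) \<bullet> b)"
    using borel_measurable_linear[OF lin] le
    by (simp add: emeasure_distr borel_open emeasure_lborel_box_eq inner_diff_left)
qed simp

lemma lborel_distr_map_fst:
  fixes f :: "'a::euclidean_space \<Rightarrow> 'a"
  assumes f: "f \<in> borel_measurable borel"
    and F: "distr lborel borel (\<lambda>z::'a \<times> 'b::euclidean_space. (f (fst z), snd z)) = lborel"
  shows "distr lborel borel f = lborel"
proof (rule lborel_eqI[symmetric])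
  let ?F = "\<lambda>z::'a \<times> 'b. (f (fst z), snd z)" and ?C = "box (0::'b) One"
  have "?F \<in> (borel \<Otimes>\<^sub>M borel) \<rightarrow>\<^sub>M (borel \<Otimes>\<^sub>M borel)"
    using f by measurable
  then have F_meas: "?F \<in> lborel \<rightarrow>\<^sub>M borel" by (simp add: borel_prod)
  have C_unit: "emeasure lborel ?C = 1" by (simp add: emeasure_lborel_box_eq)
  fix l u :: 'a assume le: "\<And>b. b \<in> Basis \<Longrightarrow> l \<bullet> b \<le> u \<bullet> b"
  have open_sets: "f -` box l u \<in> sets lborel" "box l u \<in> sets lborel" "?C \<in> sets lborel"
    using f by (auto simp: borel_open measurable_sets_borel)
  have "emeasure lborel (f -` box l u) = emeasure (lborel \<Otimes>\<^sub>M lborel) (f -` box l u \<times> ?C)"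
    using open_sets by (simp add: lborel.emeasure_pair_measure_Times C_unit)
  also have "f -` box l u \<times> ?C = ?F -` (box l u \<times> ?C)" by auto
  also have "emeasure (lborel \<Otimes>\<^sub>M lborel) (?F -` (box l u \<times> ?C))
             = emeasure (distr lborel borel ?F) (box l u \<times> ?C)"
    using emeasure_distr[OF F_meas borel_open[OF open_Times[OF open_box open_box]]]
    by (simp add: lborel_prod)
  also have "\<dots> = emeasure lborel (box l u)"
    unfolding F using open_sets by (simp add: lborel_prod[symmetric] lborel.emeasure_pair_measure_Times C_unit)
  finally show "emeasure (distr lborel borel f) (box l u) = (\<Prod>b\<in>Basis. (u - l) \<bullet> b)"
    using f le by (simp add: emeasure_distr borel_open emeasure_lborel_box_eq inner_diff_left)
qed simp

text \<open>The library has rotation invariance of Lebesgue measure only on \<open>real^'n\<close> with a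
  well-ordered index type. The map \<open>f \<times> id\<close> on \<open>'a \<times> 'a\<close> is carried by a basis bijection
  to such a space, indexed by \<open>'k bit0\<close>.\<close>

lemma lborel_distr_orthogonal:
  fixes f :: "'a::euclidean_space \<Rightarrow> 'a"
  assumes dim: "DIM('a) = CARD('k::finite)" and f: "orthogonal_transformation f"
  shows "distr lborel borel f = lborel"
proof -
  have card_eq: "card (Basis :: ('a \<times> 'a) set) = card (Basis :: (real^('k bit0)) set)"
    using dim by simp
  obtain \<beta> :: "'a \<times> 'a \<Rightarrow> real^('k bit0)" where \<beta>: "bij_betw \<beta> Basis Basis"
    using finite_same_card_bij[OF finite_Basis finite_Basis card_eq] by blast
  have \<gamma>: "bij_betw (inv_into Basis \<beta>) Basis Basis" using \<beta> by (rule bij_betw_inv_into)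
  define \<psi> where "\<psi> = basis_transfer \<beta>"
  define \<phi> where "\<phi> = basis_transfer (inv_into Basis \<beta>)"
  define F where "F z = (f (fst z), snd z)" for z :: "'a \<times> 'a"
  have lin_F: "linear F"
    using orthogonal_transformation_linear[OF f] by (intro linearI) (auto simp: F_def linear_add linear_cmul)
  have norm_F: "norm (F z) = norm z" for z
    using f by (cases z) (simp add: F_def norm_Pair orthogonal_transformation_norm)
  have lin: "linear \<psi>" "linear \<phi>" "linear (\<psi> \<circ> F \<circ> \<phi>)"
    unfolding \<psi>_def \<phi>_def by (auto intro: linear_compose lin_F linear_basis_transfer)
  have "orthogonal_transformation (\<psi> \<circ> F \<circ> \<phi>)"
    unfolding orthogonal_transformation using lin(3)
    by (simp add: \<psi>_def \<phi>_def norm_F norm_basis_transfer[OF \<beta>] norm_basis_transfer[OF \<gamma>])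
  then have rotated: "distr lborel borel (\<psi> \<circ> F \<circ> \<phi>) = lborel" by (rule lborel_distr_orthogonal_vec)
  have \<phi>_lborel: "distr lborel borel \<phi> = lborel"
    unfolding \<phi>_def using \<gamma> by (rule lborel_distr_basis_transfer)
  have meas: "\<phi> \<in> borel_measurable borel" "F \<in> borel_measurable borel" "\<psi> \<circ> F \<circ> \<phi> \<in> borel_measurable borel"
    using lin lin_F by (simp_all add: borel_measurable_linear)
  have conj: "F \<circ> \<phi> = \<phi> \<circ> (\<psi> \<circ> F \<circ> \<phi>)"
    by (simp add: fun_eq_iff \<psi>_def \<phi>_def basis_transfer_inverse[OF \<beta>])
  have "distr lborel borel F = distr (distr lborel borel \<phi>) borel F" by (simp add: \<phi>_lborel)
  also have "\<dots> = distr lborel borel (F \<circ> \<phi>)" using meas by (intro distr_distr) auto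
  also have "\<dots> = distr (distr lborel borel (\<psi> \<circ> F \<circ> \<phi>)) borel \<phi>"
    unfolding conj using meas by (intro distr_distr[symmetric]) auto
  also have "\<dots> = lborel" by (simp add: rotated \<phi>_lborel)
  finally have "distr lborel borel (\<lambda>z::'a \<times> 'a. (f (fst z), snd z)) = lborel"
    by (simp add: F_def[abs_def])
  with borel_measurable_linear[OF orthogonal_transformation_linear[OF f]] show ?thesis
    by (rule lborel_distr_map_fst)
qed

lemma sets_std_gauss [simp]: "sets (std_gauss :: 'a::euclidean_space measure) = sets borel"
  by (simp add: std_gauss_def)

lemma measurable_std_gauss [simp]: "measurable (std_gauss :: 'a::euclidean_space measure) N = measurable borel N"
  by (rule measurable_cong_sets) auto

lemma prod_std_normal_density_eq:
  fixes x :: "'a::euclidean_space"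
  shows "(\<Prod>b\<in>Basis. std_normal_density (x \<bullet> b)) = (1 / sqrt (2 * pi)) ^ DIM('a) * exp (- (norm x)\<^sup>2 / 2)"
proof -
  have "(\<Prod>b\<in>Basis. std_normal_density (x \<bullet> b)) = (\<Prod>b\<in>Basis. 1 / sqrt (2 * pi) * exp (- (x \<bullet> b)\<^sup>2 / 2))"
    by (simp add: std_normal_density_def normal_density_def)
  also have "\<dots> = (1 / sqrt (2 * pi)) ^ DIM('a) * exp (\<Sum>b\<in>Basis. - (x \<bullet> b)\<^sup>2 / 2)"
    by (simp only: prod.distrib prod_constant exp_sum[OF finite_Basis])
  also have "(\<Sum>b\<in>Basis. - (x \<bullet> b)\<^sup>2 / 2) = - (norm x)\<^sup>2 / 2"
  proof -
    have "(norm x)\<^sup>2 = (\<Sum>b\<in>Basis. (x \<bullet> b) * (x \<bullet> b))"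
      by (simp add: power2_norm_eq_inner euclidean_inner[of x x])
    then show ?thesis by (simp add: sum_divide_distrib[symmetric] sum_negf power2_eq_square)
  qed
  finally show ?thesis .
qed

lemma distr_std_gauss_orthogonal:
  fixes f :: "'a::euclidean_space \<Rightarrow> 'a"
  assumes dim: "DIM('a) = CARD('k::finite)" and f: "orthogonal_transformation f"
  shows "distr std_gauss borel f = std_gauss"
proof -
  define \<rho> where "\<rho> x = ennreal (\<Prod>b\<in>Basis. std_normal_density (x \<bullet> b))" for x :: 'a
  have \<rho>_f: "\<rho> (f x) = \<rho> x" for x
    using f by (simp add: \<rho>_def prod_std_normal_density_eq orthogonal_transformation_norm)
  have f_meas: "f \<in> lborel \<rightarrow>\<^sub>M borel"
    using borel_measurable_linear[OF orthogonal_transformation_linear[OF f]] by simp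
  have \<rho>_meas: "\<rho> \<in> borel_measurable borel" unfolding \<rho>_def by measurable
  have gauss: "std_gauss = density lborel \<rho>" by (simp add: std_gauss_def \<rho>_def[abs_def])
  also have "\<dots> = density (distr lborel borel f) \<rho>" by (simp add: lborel_distr_orthogonal[OF dim f])
  also have "\<dots> = distr (density lborel (\<lambda>x. \<rho> (f x))) borel f" by (rule density_distr[OF \<rho>_meas f_meas])
  also have "\<dots> = distr std_gauss borel f" by (simp add: \<rho>_f gauss)
  finally show ?thesis by (rule sym)
qed

lemma integral_std_gauss_orthogonal:
  fixes f :: "'a::euclidean_space \<Rightarrow> 'a" and g :: "'a \<Rightarrow> real"
  assumes dim: "DIM('a) = CARD('k::finite)" and f: "orthogonal_transformation f"
  shows "(LINT x|std_gauss. g (f x)) = (LINT x|std_gauss. g x)"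
proof (cases "g \<in> borel_measurable borel")
  case True
  have f_meas: "f \<in> std_gauss \<rightarrow>\<^sub>M borel"
    using borel_measurable_linear[OF orthogonal_transformation_linear[OF f]] by simp
  have "(LINT x|std_gauss. g x) = (LINT x|distr std_gauss borel f. g x)"
    by (simp add: distr_std_gauss_orthogonal[OF dim f])
  also have "\<dots> = (LINT x|std_gauss. g (f x))" by (rule integral_distr[OF f_meas True])
  finally show ?thesis by (rule sym)
next
  case False
  have inv_meas: "inv f \<in> borel_measurable borel"
    using orthogonal_transformation_inv[OF f]
    by (simp add: borel_measurable_linear orthogonal_transformation_linear)
  have f_inv: "f (inv f x) = x" for x
    using orthogonal_transformation_surj[OF f] by (simp add: surj_f_inv_f)
  have "(\<lambda>x. g (f x)) \<notin> borel_measurable borel"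
  proof
    assume "(\<lambda>x. g (f x)) \<in> borel_measurable borel"
    from measurable_compose[OF inv_meas this] False show False by (simp add: f_inv)
  qed
  moreover have "\<not> integrable std_gauss h" if "h \<notin> borel_measurable borel" for h :: "'a \<Rightarrow> real"
    using that borel_measurable_integrable[of std_gauss h] by auto
  ultimately show ?thesis using False by (simp add: not_integrable_integral_eq)
qed

section \<open>Uniqueness for locally Lipschitz flows\<close>

lemma flow_difference_bound:
  fixes G :: "'v::real_normed_vector \<Rightarrow> 'v" and p q :: "real \<Rightarrow> 'v"
  assumes I: "convex I" and z: "z \<in> I" "p z = q z"
    and fp: "\<And>t. t \<in> I \<Longrightarrow> (p has_vector_derivative (- G (p t))) (at t within I)"
    and fq: "\<And>t. t \<in> I \<Longrightarrow> (q has_vector_derivative (- G (q t))) (at t within I)"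
    and K: "K-lipschitz_on B G" and B: "p ` I \<subseteq> B" "q ` I \<subseteq> B"
    and M: "\<And>t. t \<in> I \<Longrightarrow> norm (p t - q t) \<le> M"
    and t: "t \<in> I"
  shows "norm (p t - q t) \<le> K * M * norm (t - z)"
proof -
  have der: "((\<lambda>t. p t - q t) has_derivative (\<lambda>h. h *\<^sub>R (G (q u) - G (p u)))) (at u within I)"
    if "u \<in> I" for u
    using has_vector_derivative_diff[OF fp[OF that] fq[OF that]] by (simp add: has_vector_derivative_def)
  have "onorm (\<lambda>h. h *\<^sub>R (G (q u) - G (p u))) \<le> K * M" if u: "u \<in> I" for u
  proof -
    have "onorm (\<lambda>h::real. h *\<^sub>R (G (q u) - G (p u))) = norm (G (q u) - G (p u))"
      using onorm_scaleR_left[OF bounded_linear_ident] by (simp add: onorm_id)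
    also have "\<dots> \<le> K * dist (q u) (p u)"
      using lipschitz_onD[OF K, of "q u" "p u"] B u by (auto simp: dist_norm)
    also have "\<dots> \<le> K * M"
      using M[OF u] lipschitz_on_nonneg[OF K] by (simp add: dist_norm norm_minus_commute mult_left_mono)
    finally show ?thesis .
  qed
  from differentiable_bound[OF I der this t z(1)] z(2) show ?thesis by simp
qed

lemma flow_locally_unique:
  fixes G :: "'v::real_normed_vector \<Rightarrow> 'v" and p q :: "real \<Rightarrow> 'v"
  assumes lip: "\<And>x. \<exists>e>0. \<exists>K. K-lipschitz_on (cball x e) G"
    and fp: "\<And>t. t \<in> S \<Longrightarrow> (p has_vector_derivative (- G (p t))) (at t within S)"
    and fq: "\<And>t. t \<in> S \<Longrightarrow> (q has_vector_derivative (- G (q t))) (at t within S)"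
    and S: "convex S" "closed S"
    and z: "z \<in> S" "p z = q z"
  shows "\<exists>d>0. \<forall>t\<in>S. dist t z < d \<longrightarrow> p t = q t"
proof -
  have cont: "continuous_on S p" "continuous_on S q"
    using fp fq continuous_on_eq_continuous_within has_vector_derivative_continuous by blast+
  obtain e K0 where e: "e > 0" and K0: "K0-lipschitz_on (cball (p z) e) G" using lip by blast
  define K where "K = max K0 1"
  have K: "K-lipschitz_on (cball (p z) e) G" "K > 0"
    using K0 by (auto simp: K_def intro: lipschitz_on_le)
  obtain dp where dp: "dp > 0" "\<forall>t\<in>S. dist t z < dp \<longrightarrow> dist (p t) (p z) < e"
    using cont(1) z(1) e unfolding continuous_on_iff by blast
  obtain dq where dq: "dq > 0" "\<forall>t\<in>S. dist t z < dq \<longrightarrow> dist (q t) (q z) < e"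
    using cont(2) z(1) e unfolding continuous_on_iff by blast
  define d where "d = min (min dp dq / 2) (1 / (2 * K))"
  have d: "d > 0" "d < dp" "d < dq"
    using dp dq K by (auto simp: d_def)
  have "d \<le> 1 / (2 * K)" by (simp add: d_def)
  then have Kd: "K * d \<le> 1 / 2" using K(2) by (simp add: field_simps)
  define I where "I = S \<inter> cball z d"
  have I: "convex I" "compact I" "z \<in> I" "I \<subseteq> S"
    unfolding I_def using S z d by (auto intro: convex_Int closed_Int_compact)
  have in_ball: "p ` I \<subseteq> cball (p z) e" "q ` I \<subseteq> cball (p z) e"
    using dp dq d z(2) by (force simp: I_def dist_commute)+
  have "continuous_on I (\<lambda>t. norm (p t - q t))"
    using cont I(4) by (intro continuous_intros) (auto intro: continuous_on_subset)
  then obtain tm where tm: "tm \<in> I" "\<And>t. t \<in> I \<Longrightarrow> norm (p t - q t) \<le> norm (p tm - q tm)"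
    using continuous_attains_sup[OF I(2)] I(3) by blast
  let ?M = "norm (p tm - q tm)"
  \<comment> \<open>on \<open>I\<close> the Lipschitz estimate contracts the maximal deviation by \<open>K d \<le> 1/2\<close>\<close>
  have "?M \<le> K * ?M * norm (tm - z)"
    using fp fq I(4) by (intro flow_difference_bound[OF I(1,3) z(2) _ _ K(1) in_ball tm(2) tm(1)])
      (auto intro: has_vector_derivative_within_subset)
  also have "\<dots> \<le> K * ?M * d"
    using tm(1) K(2) by (intro mult_left_mono) (auto simp: I_def dist_norm norm_minus_commute)
  also have "\<dots> = (K * d) * ?M" by (simp add: algebra_simps)
  also have "\<dots> \<le> 1 / 2 * ?M" by (rule mult_right_mono[OF Kd]) simp
  finally have "?M = 0" by simp
  then have "p t = q t" if "t \<in> I" for t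
    using tm(2)[OF that] by simp
  then show ?thesis
    using d(1) by (intro exI[of _ d]) (auto simp: I_def dist_commute)
qed

lemma flow_unique:
  fixes G :: "'v::real_normed_vector \<Rightarrow> 'v" and p q :: "real \<Rightarrow> 'v"
  assumes lip: "\<And>x. \<exists>e>0. \<exists>K. K-lipschitz_on (cball x e) G"
    and fp: "\<And>t. t \<in> {0..t1} \<Longrightarrow> (p has_vector_derivative (- G (p t))) (at t within {0..t1})"
    and fq: "\<And>t. t \<in> {0..t1} \<Longrightarrow> (q has_vector_derivative (- G (q t))) (at t within {0..t1})"
    and s: "s \<in> {0..t1}" "p s = q s"
    and t: "t \<in> {0..t1}"
  shows "p t = q t"
proof -
  let ?S = "{0..t1::real}"
  define Z where "Z = {t \<in> ?S. p t - q t = 0}"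
  have "continuous_on ?S p"
    using fp continuous_on_eq_continuous_within has_vector_derivative_continuous by blast
  moreover have "continuous_on ?S q"
    using fq continuous_on_eq_continuous_within has_vector_derivative_continuous by blast
  ultimately have "closedin (top_of_set ?S) Z"
    unfolding Z_def by (intro continuous_closedin_preimage_constant continuous_intros)
  moreover have "openin (top_of_set ?S) Z"
    unfolding openin_euclidean_subtopology_iff
  proof (intro conjI ballI)
    fix z assume "z \<in> Z"
    then have "\<exists>d>0. \<forall>t\<in>?S. dist t z < d \<longrightarrow> p t = q t"
      by (intro flow_locally_unique[OF lip fp fq]) (auto simp: Z_def)
    then obtain d where "d > 0" "\<forall>t\<in>?S. dist t z < d \<longrightarrow> p t = q t" by blast
    then show "\<exists>e>0. \<forall>x'\<in>?S. dist x' z < e \<longrightarrow> x' \<in> Z" by (auto simp: Z_def)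
  qed (auto simp: Z_def)
  ultimately have "Z = {} \<or> Z = ?S"
    using connected_clopen[THEN iffD1, rule_format, OF connected_Icc] by blast
  moreover have "s \<in> Z" using s by (simp add: Z_def)
  ultimately have "t \<in> Z" using t by blast
  then show ?thesis by (simp add: Z_def)
qed

definition reflection_symmetry :: "('p::real_inner \<Rightarrow> real) \<Rightarrow> ('p \<Rightarrow> 'p) \<Rightarrow> bool" where
  "reflection_symmetry E T \<longleftrightarrow>
     linear T \<and> (\<forall>x. T (T x) = x) \<and> (\<forall>x y. T x \<bullet> y = x \<bullet> T y) \<and> (\<forall>x. E (T x) = E x)"

lemma gradient_reflection_commute:
  fixes E :: "'p::euclidean_space \<Rightarrow> real" and G :: "'p \<Rightarrow> 'p"
  assumes grad: "\<And>x. (E has_derivative (\<lambda>y. G x \<bullet> y)) (at x)"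
    and T: "reflection_symmetry E T"
  shows "G (T x) = T (G x)"
proof -
  have lin: "linear T" and inv: "\<And>x. T (T x) = x" and adj: "\<And>x y. T x \<bullet> y = x \<bullet> T y"
    and E_T: "\<And>x. E (T x) = E x"
    using T by (auto simp: reflection_symmetry_def)
  have "((\<lambda>y. E (T y)) has_derivative (\<lambda>y. G (T x) \<bullet> T y)) (at x)"
    using has_derivative_compose[OF linear_imp_has_derivative[OF lin] grad[of "T x"]] .
  moreover have "((\<lambda>y. E (T y)) has_derivative (\<lambda>y. G x \<bullet> y)) (at x)"
    using grad[of x] by (simp add: E_T)
  ultimately have "(\<lambda>y. G (T x) \<bullet> T y) = (\<lambda>y. G x \<bullet> y)" by (rule has_derivative_unique)
  then have "(G (T x) - T (G x)) \<bullet> w = 0" for w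
    by (metis adj inv inner_diff_left right_minus_eq)
  from this[of "G (T x) - T (G x)"] show ?thesis by simp
qed

text \<open>Since the gradient commutes with \<open>T\<close>, \<open>T \<circ> p\<close> solves the same flow as \<open>p\<close>,
  so uniqueness applies.\<close>

lemma gradient_flow_reflection_fixed:
  fixes E :: "'p::euclidean_space \<Rightarrow> real" and G :: "'p \<Rightarrow> 'p" and p :: "real \<Rightarrow> 'p"
  assumes grad: "\<And>x. (E has_derivative (\<lambda>y. G x \<bullet> y)) (at x)"
    and lip: "\<And>x. \<exists>e>0. \<exists>K. K-lipschitz_on (cball x e) G"
    and flow: "\<And>t. t \<in> {0..t1} \<Longrightarrow> (p has_vector_derivative (- G (p t))) (at t within {0..t1})"
    and T: "reflection_symmetry E T"
    and s: "s \<in> {0..t1}" "T (p s) = p s"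
    and t: "t \<in> {0..t1}"
  shows "T (p t) = p t"
proof -
  have lin: "linear T" using T by (simp add: reflection_symmetry_def)
  have "((\<lambda>t. T (p t)) has_vector_derivative (- G (T (p u)))) (at u within {0..t1})"
    if "u \<in> {0..t1}" for u
    using bounded_linear.has_vector_derivative[OF linear_conv_bounded_linear[THEN iffD1, OF lin] flow[OF that]]
    by (simp add: gradient_reflection_commute[OF grad T] linear_neg[OF lin])
  from flow_unique[OF lip this flow s t] show ?thesis .
qed

section \<open>Symmetries of the loss\<close>

type_synonym ('f, 'h) params = "(real^'f^'h) \<times> (real^'h^'h) \<times> (real^'h) \<times> real"

lemma sum_involution:
  fixes \<sigma> :: "'a::finite \<Rightarrow> 'a"
  assumes "\<And>x. \<sigma> (\<sigma> x) = x"
  shows "(\<Sum>x\<in>UNIV. f (\<sigma> x)) = (\<Sum>x\<in>UNIV. f x)"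
  by (rule sum.reindex_bij_witness[of _ \<sigma> \<sigma>]) (auto simp: assms)

lemma sum_involution_swap:
  fixes \<sigma> :: "'a::finite \<Rightarrow> 'a"
  assumes "\<And>x. \<sigma> (\<sigma> x) = x"
  shows "(\<Sum>x\<in>UNIV. f (\<sigma> x) x) = (\<Sum>x\<in>UNIV. f x (\<sigma> x))"
  using sum_involution[OF assms, of "\<lambda>x. f x (\<sigma> x)"] by (simp add: assms)

lemma inner_matrix_mult_left:
  fixes A :: "real^'n^'n" and X Y :: "real^'m^'n"
  shows "(A ** X) \<bullet> Y = X \<bullet> (transpose A ** Y)"
proof -
  have "(A ** X) \<bullet> Y = (\<Sum>i\<in>UNIV. \<Sum>j\<in>UNIV. \<Sum>k\<in>UNIV. A$i$k * X$k$j * Y$i$j)"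
    by (simp add: inner_vec_def matrix_matrix_mult_def sum_distrib_right)
  also have "\<dots> = (\<Sum>i\<in>UNIV. \<Sum>k\<in>UNIV. \<Sum>j\<in>UNIV. A$i$k * X$k$j * Y$i$j)"
    by (subst sum.swap) simp
  also have "\<dots> = (\<Sum>k\<in>UNIV. \<Sum>i\<in>UNIV. \<Sum>j\<in>UNIV. A$i$k * X$k$j * Y$i$j)"
    by (rule sum.swap)
  also have "\<dots> = (\<Sum>k\<in>UNIV. \<Sum>j\<in>UNIV. \<Sum>i\<in>UNIV. A$i$k * X$k$j * Y$i$j)"
    by (subst sum.swap) simp
  also have "\<dots> = X \<bullet> (transpose A ** Y)"
    by (simp add: inner_vec_def matrix_matrix_mult_def transpose_def sum_distrib_left mult_ac)
  finally show ?thesis .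
qed

lemma inner_matrix_mult_right:
  fixes A :: "real^'n^'n" and X Y :: "real^'n^'m"
  shows "(X ** A) \<bullet> Y = X \<bullet> (Y ** transpose A)"
proof -
  have "(X ** A) \<bullet> Y = (\<Sum>i\<in>UNIV. \<Sum>j\<in>UNIV. \<Sum>k\<in>UNIV. X$i$k * A$k$j * Y$i$j)"
    by (simp add: inner_vec_def matrix_matrix_mult_def sum_distrib_right)
  also have "\<dots> = (\<Sum>i\<in>UNIV. \<Sum>k\<in>UNIV. \<Sum>j\<in>UNIV. X$i$k * A$k$j * Y$i$j)"
    by (subst sum.swap) simp
  also have "\<dots> = X \<bullet> (Y ** transpose A)"
    by (simp add: inner_vec_def matrix_matrix_mult_def transpose_def sum_distrib_left mult_ac)
  finally show ?thesis .
qed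

lemma orthogonal_transformation_matrix_mult_left:
  fixes Q :: "real^'h^'h"
  assumes Q: "transpose Q ** Q = mat 1"
  shows "orthogonal_transformation (\<lambda>\<xi>::real^'l^'h. Q ** \<xi>)"
  unfolding orthogonal_transformation
proof (intro conjI allI)
  show "linear (\<lambda>\<xi>::real^'l^'h. Q ** \<xi>)"
    by (rule linearI) (simp_all add: matrix_add_ldistrib matrix_scalar_ac scalar_matrix_assoc)
  fix \<xi> :: "real^'l^'h"
  have "(Q ** \<xi>) \<bullet> (Q ** \<xi>) = \<xi> \<bullet> \<xi>"
    by (simp add: inner_matrix_mult_left matrix_mul_assoc Q)
  then show "norm (Q ** \<xi>) = norm \<xi>" by (simp add: norm_eq_sqrt_inner)
qed

lemma orthogonal_transformation_permute_rows:
  fixes \<sigma> :: "'h::finite \<Rightarrow> 'h"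
  assumes \<sigma>: "\<And>x. \<sigma> (\<sigma> x) = x"
  shows "orthogonal_transformation (\<lambda>\<xi>::real^'l::finite^'h. \<chi> h. \<xi>$(\<sigma> h))"
  unfolding orthogonal_transformation
proof (intro conjI allI)
  show "linear (\<lambda>\<xi>::real^'l^'h. \<chi> h. \<xi>$(\<sigma> h))"
    by (rule linearI) (simp_all add: vec_eq_iff)
  fix \<xi> :: "real^'l^'h"
  have "(\<chi> h. \<xi>$(\<sigma> h)) \<bullet> (\<chi> h. \<xi>$(\<sigma> h)) = \<xi> \<bullet> \<xi>"
    using sum_involution[OF \<sigma>, of "\<lambda>h. \<xi>$h \<bullet> \<xi>$h"] by (simp add: inner_vec_def)
  then show "norm (\<chi> h. \<xi>$(\<sigma> h)) = norm \<xi>" by (simp add: norm_eq_sqrt_inner)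
qed

lemma Eloss_eq_if_sample_loss_rotated:
  fixes \<Phi> :: "real^'l::finite^'h::finite \<Rightarrow> real^'l^'h" and m m' :: "real^'f::finite^'h"
  assumes \<Phi>: "orthogonal_transformation \<Phi>"
    and loss: "\<And>eps cs \<xi>. sample_loss a m' r' b' v' eps cs \<xi> = sample_loss a m r b v eps cs (\<Phi> \<xi>)"
  shows "Eloss (L::'l itself) P a m' r' b' v' = Eloss L P a m r b v"
proof -
  have dim: "DIM(real^'l^'h) = CARD('h \<times> 'l)" by simp
  have "(LINT \<xi>|std_gauss. sample_loss a m' r' b' v' eps cs \<xi>) = (LINT \<xi>|std_gauss. sample_loss a m r b v eps cs \<xi>)"
    for eps :: 'l and cs
    using integral_std_gauss_orthogonal[OF dim \<Phi>, of "sample_loss a m r b v eps cs"] by (simp add: loss)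
  then show ?thesis by (simp add: Eloss_def)
qed

lemma sample_loss_matrix_mult_right:
  "sample_loss a m (r ** Q) b v eps cs \<xi> = sample_loss a m r b v eps cs (Q ** \<xi>)"
  by (simp add: sample_loss_def matrix_mul_assoc)

lemma sample_loss_permute_heads:
  fixes \<sigma> :: "'h::finite \<Rightarrow> 'h" and m :: "real^'f::finite^'h" and cs :: "real^'l::finite^'f"
  assumes \<sigma>: "\<And>x. \<sigma> (\<sigma> x) = x"
  shows "sample_loss a (\<chi> h. m$(\<sigma> h)) (\<chi> i j. r$(\<sigma> i)$(\<sigma> j)) (\<chi> h. b$(\<sigma> h)) v eps cs \<xi>
       = sample_loss a m r b v eps cs (\<chi> h. \<xi>$(\<sigma> h))"
proof -
  define c where "c = m ** cs + r ** (\<chi> h. \<xi>$(\<sigma> h))"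
  have "(\<Sum>j\<in>UNIV. r$(\<sigma> h)$(\<sigma> j) * \<xi>$j$l) = (\<Sum>k\<in>UNIV. r$(\<sigma> h)$k * \<xi>$(\<sigma> k)$l)" for h l
    using sum_involution[OF \<sigma>, of "\<lambda>k. r$(\<sigma> h)$k * \<xi>$(\<sigma> k)$l"] by (simp add: \<sigma>)
  then have chi: "(\<chi> h. m$(\<sigma> h)) ** cs + (\<chi> i j. r$(\<sigma> i)$(\<sigma> j)) ** \<xi> = (\<chi> h. c$(\<sigma> h))"
    by (simp add: vec_eq_iff c_def matrix_matrix_mult_def)
  have "(\<Sum>h'\<in>UNIV. \<Sum>l'\<in>UNIV. exp (c$(\<sigma> h')$l' + b$(\<sigma> h'))) = (\<Sum>h'\<in>UNIV. \<Sum>l'\<in>UNIV. exp (c$h'$l' + b$h'))"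
    by (rule sum_involution[OF \<sigma>])
  then have act: "act_fun a (\<chi> h. c$(\<sigma> h)) (\<chi> h. b$(\<sigma> h)) v h l = act_fun a c b v (\<sigma> h) l" for h l
    by (cases a) (simp_all add: act_fun_def)
  have "(\<Sum>h\<in>UNIV. act_fun a c b v (\<sigma> h) l) = (\<Sum>h\<in>UNIV. act_fun a c b v h l)" for l
    by (rule sum_involution[OF \<sigma>])
  then show ?thesis
    by (simp add: sample_loss_def Let_def chi act) (simp add: c_def)
qed

definition permute_heads :: "('h::finite \<Rightarrow> 'h) \<Rightarrow> ('f::finite, 'h) params \<Rightarrow> ('f, 'h) params" where
  "permute_heads \<sigma> = (\<lambda>(m, r, b, v). ((\<chi> h. m$(\<sigma> h)), (\<chi> i j. r$(\<sigma> i)$(\<sigma> j)), (\<chi> h. b$(\<sigma> h)), v))"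

definition mult_r_right :: "real^'h::finite^'h \<Rightarrow> ('f::finite, 'h) params \<Rightarrow> ('f, 'h) params" where
  "mult_r_right Q = (\<lambda>(m, r, b, v). (m, r ** Q, b, v))"

lemma permute_heads_eq_self_iff:
  "permute_heads \<sigma> (m, r, b, v) = (m, r, b, v) \<longleftrightarrow>
     (\<forall>h. m$(\<sigma> h) = m$h) \<and> (\<forall>i j. r$(\<sigma> i)$(\<sigma> j) = r$i$j) \<and> (\<forall>h. b$(\<sigma> h) = b$h)"
  by (auto simp: permute_heads_def vec_eq_iff)

lemma mult_r_right_eq_self_iff: "mult_r_right Q (m, r, b, v) = (m, r, b, v) \<longleftrightarrow> r ** Q = r"
  by (simp add: mult_r_right_def)

lemma inner_permute_heads:
  fixes \<sigma> :: "'h::finite \<Rightarrow> 'h" and x y :: "('f::finite, 'h) params"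
  assumes \<sigma>: "\<And>x. \<sigma> (\<sigma> x) = x"
  shows "permute_heads \<sigma> x \<bullet> y = x \<bullet> permute_heads \<sigma> y"
proof -
  have "(\<Sum>i\<in>UNIV. \<Sum>k\<in>UNIV. m$(\<sigma> i)$k * m'$i$k) = (\<Sum>i\<in>UNIV. \<Sum>k\<in>UNIV. m$i$k * m'$(\<sigma> i)$k)"
    for m m' :: "real^'f^'h"
    using sum_involution_swap[OF \<sigma>, of "\<lambda>i i'. \<Sum>k\<in>UNIV. m$i$k * m'$i'$k"] by simp
  moreover have "(\<Sum>i\<in>UNIV. b$(\<sigma> i) * b'$i) = (\<Sum>i\<in>UNIV. b$i * b'$(\<sigma> i))" for b b' :: "real^'h"
    using sum_involution_swap[OF \<sigma>, of "\<lambda>i i'. b$i * b'$i'"] by simp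
  moreover have "(\<Sum>i\<in>UNIV. \<Sum>j\<in>UNIV. r$(\<sigma> i)$(\<sigma> j) * r'$i$j)
      = (\<Sum>i\<in>UNIV. \<Sum>j\<in>UNIV. r$i$j * r'$(\<sigma> i)$(\<sigma> j))" for r r' :: "real^'h^'h"
    using sum_involution_swap[OF \<sigma>, of "\<lambda>j j'. r$(\<sigma> _)$j * r'$_$j'"]
      sum_involution_swap[OF \<sigma>, of "\<lambda>i i'. \<Sum>j\<in>UNIV. r$i$j * r'$i'$(\<sigma> j)"] by simp
  ultimately show ?thesis
    by (auto simp: permute_heads_def inner_vec_def inner_prod_def split: prod.splits)
qed

lemma reflection_symmetry_permute_heads:
  fixes \<sigma> :: "'h::finite \<Rightarrow> 'h"
  assumes \<sigma>: "\<And>x. \<sigma> (\<sigma> x) = x"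
  shows "reflection_symmetry (Eloss_param P a (L::'l::finite itself))
           (permute_heads \<sigma> :: ('f::finite, 'h) params \<Rightarrow> _)"
  unfolding reflection_symmetry_def
proof (intro conjI allI)
  show "linear (permute_heads \<sigma> :: ('f, 'h) params \<Rightarrow> _)"
    by (rule linearI) (auto simp: permute_heads_def vec_eq_iff split: prod.splits)
  fix x y :: "('f, 'h) params"
  show "permute_heads \<sigma> (permute_heads \<sigma> x) = x"
    by (cases x) (simp add: permute_heads_def vec_eq_iff \<sigma>)
  show "permute_heads \<sigma> x \<bullet> y = x \<bullet> permute_heads \<sigma> y" by (rule inner_permute_heads[OF \<sigma>])
  show "Eloss_param P a L (permute_heads \<sigma> x) = Eloss_param P a L x"
    by (auto simp: Eloss_param_def permute_heads_def split: prod.splits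
        intro!: Eloss_eq_if_sample_loss_rotated[OF orthogonal_transformation_permute_rows[OF \<sigma>]]
        sample_loss_permute_heads[OF \<sigma>])
qed

lemma reflection_symmetry_mult_r_right:
  fixes Q :: "real^'h::finite^'h"
  assumes sym: "transpose Q = Q" and inv: "Q ** Q = mat 1"
  shows "reflection_symmetry (Eloss_param P a (L::'l::finite itself))
           (mult_r_right Q :: ('f::finite, 'h) params \<Rightarrow> _)"
  unfolding reflection_symmetry_def
proof (intro conjI allI)
  show "linear (mult_r_right Q :: ('f, 'h) params \<Rightarrow> _)"
  proof (rule linearI)
    fix x y :: "('f, 'h) params" and c :: real
    show "mult_r_right Q (x + y) = mult_r_right Q x + mult_r_right Q y"
      by (cases x, cases y) (simp add: mult_r_right_def vec_eq_iff matrix_matrix_mult_def sum.distrib algebra_simps)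
    show "mult_r_right Q (c *\<^sub>R x) = c *\<^sub>R mult_r_right Q x"
      by (cases x) (simp add: mult_r_right_def scalar_matrix_assoc)
  qed
  fix x y :: "('f, 'h) params"
  show "mult_r_right Q (mult_r_right Q x) = x"
    by (auto simp: mult_r_right_def matrix_mul_assoc[symmetric] inv split: prod.splits)
  show "mult_r_right Q x \<bullet> y = x \<bullet> mult_r_right Q y"
    by (auto simp: mult_r_right_def inner_prod_def inner_matrix_mult_right sym split: prod.splits)
  show "Eloss_param P a L (mult_r_right Q x) = Eloss_param P a L x"
    using sym inv
    by (auto simp: Eloss_param_def mult_r_right_def split: prod.splits
        intro!: Eloss_eq_if_sample_loss_rotated[OF orthogonal_transformation_matrix_mult_left]
        sample_loss_matrix_mult_right)
qed

section \<open>The unspecialized manifold\<close>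

definition isotropic_mat :: "real \<Rightarrow> real \<Rightarrow> real^'h::finite^'h" where
  "isotropic_mat r1 r2 = (\<chi> i j. r1 * (if i = j then 1 else 0) + r2)"

lemma isotropic_mat_nth [simp]: "isotropic_mat r1 r2 $ i $ j = r1 * (if i = j then 1 else 0) + r2"
  by (simp add: isotropic_mat_def)

lemma isotropic_mat_eqI:
  assumes "\<And>i j. r$i$j = r1 * (if i = j then 1 else 0) + r2"
  shows "r = isotropic_mat r1 r2"
  using assms by (simp add: vec_eq_iff)

lemma row_sum_isotropic_mat:
  "(\<Sum>k\<in>UNIV. (isotropic_mat r1 r2 :: real^'h::finite^'h) $ i $ k) = r1 + real CARD('h) * r2"
  by (simp add: sum.distrib sum_distrib_left[symmetric])

lemma unspec_manifold_iff:
  fixes m :: "real^'f::finite^'h::finite" and r :: "real^'h^'h" and b :: "real^'h"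
  shows "(m, r, b) \<in> unspec_manifold \<longleftrightarrow>
     (\<forall>h h'. m$h = m$h') \<and>
     (\<exists>r1 r2. r1 > 0 \<and> r1 + real CARD('h) * r2 > 0 \<and> r = isotropic_mat r1 r2) \<and>
     (\<forall>h h'. b$h = b$h')"
proof -
  have "(\<exists>c. \<forall>h. m$h = c) \<longleftrightarrow> (\<forall>h h'. m$h = m$h')" "(\<exists>c. \<forall>h. b$h = c) \<longleftrightarrow> (\<forall>h h'. b$h = b$h')"
    by metis+
  moreover have "(\<forall>i j. r$i$j = r1 * (if i = j then 1 else 0) + r2) \<longleftrightarrow> r = isotropic_mat r1 r2"
    for r1 r2 by (simp add: vec_eq_iff)
  ultimately show ?thesis unfolding unspec_manifold_def by simp
qed

lemma transposition_invariant_imp_isotropic_mat: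
  fixes r :: "real^'h::finite^'h"
  assumes inv: "\<And>i k a c. r $ Transposition.transpose i k a $ Transposition.transpose i k c = r $ a $ c"
  shows "\<exists>r1 r2. r = isotropic_mat r1 r2"
proof -
  have diag: "r$i$i = r$k$k" for i k
    using inv[of i k i i] by simp
  have off_diag: "r$i$j = r$k$l" if "i \<noteq> j" "k \<noteq> l" for i j k l
  proof -
    \<comment> \<open>first move \<open>i\<close> to \<open>k\<close>, then the image \<open>j'\<close> of \<open>j\<close> to \<open>l\<close>, keeping \<open>k\<close> fixed\<close>
    define j' where "j' = Transposition.transpose i k j"
    have "k \<noteq> j'" using that(1) by (auto simp: j'_def Transposition.transpose_def)
    have "r$i$j = r$k$j'"
      using inv[of i k i j] by (simp add: j'_def)
    also have "\<dots> = r$k$l"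
      using inv[of j' l k j'] \<open>k \<noteq> j'\<close> that(2) by simp
    finally show ?thesis .
  qed
  obtain i0 :: 'h where True by simp
  show ?thesis
  proof (cases "\<exists>j0. j0 \<noteq> i0")
    case True
    then obtain j0 where "j0 \<noteq> i0" by blast
    have "r = isotropic_mat (r$i0$i0 - r$i0$j0) (r$i0$j0)"
    proof (rule isotropic_mat_eqI)
      fix i j
      show "r$i$j = (r$i0$i0 - r$i0$j0) * (if i = j then 1 else 0) + r$i0$j0"
        using diag[of i i0] off_diag[OF _ \<open>j0 \<noteq> i0\<close>[symmetric], of i j] by (cases "i = j") simp_all
    qed
    then show ?thesis by blast
  next
    case False
    then have "r = isotropic_mat (r$i0$i0) 0"
      by (intro isotropic_mat_eqI) (metis mult_cancel_left1 add_0_right)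
    then show ?thesis by blast
  qed
qed

definition head_symmetric :: "('f::finite, 'h::finite) params \<Rightarrow> bool" where
  "head_symmetric x \<longleftrightarrow> (\<forall>i k. permute_heads (Transposition.transpose i k) x = x)"

lemma head_symmetric_iff:
  "head_symmetric (m, r, b, v) \<longleftrightarrow>
     (\<forall>h h'. m$h = m$h') \<and> (\<exists>r1 r2. r = isotropic_mat r1 r2) \<and> (\<forall>h h'. b$h = b$h')"
proof
  assume "head_symmetric (m, r, b, v)"
  then have inv: "\<And>i k h. m $ Transposition.transpose i k h = m$h"
      "\<And>i k a c. r $ Transposition.transpose i k a $ Transposition.transpose i k c = r $ a $ c"
      "\<And>i k h. b $ Transposition.transpose i k h = b$h"
    by (simp_all add: head_symmetric_def permute_heads_eq_self_iff)
  have "\<forall>h h'. m$h = m$h'" "\<forall>h h'. b$h = b$h'"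
    using inv(1)[of _ _ _] inv(3) by (metis transpose_apply_first)+
  then show "(\<forall>h h'. m$h = m$h') \<and> (\<exists>r1 r2. r = isotropic_mat r1 r2) \<and> (\<forall>h h'. b$h = b$h')"
    using transposition_invariant_imp_isotropic_mat[OF inv(2)] by blast
next
  assume const: "(\<forall>h h'. m$h = m$h') \<and> (\<exists>r1 r2. r = isotropic_mat r1 r2) \<and> (\<forall>h h'. b$h = b$h')"
  then obtain r1 r2 where "r = isotropic_mat r1 r2" by blast
  moreover have "m $ Transposition.transpose i k h = m$h" "b $ Transposition.transpose i k h = b$h" for i k h
    using const by blast+
  ultimately show "head_symmetric (m, r, b, v)"
    by (auto simp: head_symmetric_def permute_heads_eq_self_iff dest: transpose_eq_imp_eq)
qed

definition reflect_ones :: "real^'h::finite^'h" where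
  "reflect_ones = (\<chi> i j. (if i = j then 1 else 0) - 2 / real CARD('h))"

lemma transpose_reflect_ones: "transpose reflect_ones = reflect_ones"
  by (simp add: reflect_ones_def transpose_def vec_eq_iff)

lemma matrix_mult_reflect_ones_nth:
  "(R ** reflect_ones) $ i $ j = R$i$j - 2 / real CARD('h) * (\<Sum>k\<in>UNIV. R$i$k)"
  for R :: "real^'h::finite^'h"
proof -
  have "(R ** reflect_ones) $ i $ j
        = (\<Sum>k\<in>UNIV. R$i$k * (if k = j then 1 else 0) - 2 / real CARD('h) * R$i$k)"
    by (simp add: matrix_matrix_mult_def reflect_ones_def algebra_simps)
  also have "\<dots> = (\<Sum>k\<in>UNIV. R$i$k * (if k = j then 1 else 0)) - (\<Sum>k\<in>UNIV. 2 / real CARD('h) * R$i$k)"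
    by (rule sum_subtractf)
  also have "(\<Sum>k\<in>UNIV. R$i$k * (if k = j then 1 else 0)) = R$i$j"
    by (simp add: if_distrib[of "(*) _"] cong: if_cong)
  finally show ?thesis by (simp add: sum_distrib_left)
qed

lemma reflect_ones_involutory: "reflect_ones ** reflect_ones = (mat 1 :: real^'h::finite^'h)"
proof -
  have "(\<Sum>k\<in>UNIV. (reflect_ones :: real^'h^'h) $ i $ k) = -1" for i
    by (simp add: reflect_ones_def sum_subtractf)
  then show ?thesis
    by (simp add: vec_eq_iff matrix_mult_reflect_ones_nth) (simp add: reflect_ones_def mat_def)
qed

lemma matrix_mult_reflect_ones_eq_self_iff:
  "R ** reflect_ones = R \<longleftrightarrow> (\<forall>i. (\<Sum>k\<in>UNIV. R$i$k) = 0)" for R :: "real^'h::finite^'h"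
  by (auto simp: vec_eq_iff matrix_mult_reflect_ones_nth)

definition perm_matrix :: "('h::finite \<Rightarrow> 'h) \<Rightarrow> real^'h^'h" where
  "perm_matrix \<sigma> = (\<chi> i j. if \<sigma> i = j then 1 else 0)"

lemma matrix_mult_perm_matrix_nth:
  assumes \<sigma>: "\<And>x. \<sigma> (\<sigma> x) = x"
  shows "(R ** perm_matrix \<sigma>) $ i $ j = R $ i $ \<sigma> j"
proof -
  have "\<sigma> k = j \<longleftrightarrow> k = \<sigma> j" for k by (metis \<sigma>)
  then have "(R ** perm_matrix \<sigma>) $ i $ j = (\<Sum>k\<in>UNIV. if k = \<sigma> j then R$i$k else 0)"
    by (simp add: matrix_matrix_mult_def perm_matrix_def if_distrib cong: if_cong)
  then show ?thesis by simp
qed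

lemma transpose_perm_matrix:
  assumes "\<And>x. \<sigma> (\<sigma> x) = x"
  shows "transpose (perm_matrix \<sigma>) = perm_matrix \<sigma>"
  by (auto simp: perm_matrix_def transpose_def vec_eq_iff assms)

lemma perm_matrix_involutory:
  assumes \<sigma>: "\<And>x. \<sigma> (\<sigma> x) = x"
  shows "perm_matrix \<sigma> ** perm_matrix \<sigma> = mat 1"
proof -
  have "(perm_matrix \<sigma> ** perm_matrix \<sigma>) $ i $ j = (if \<sigma> i = \<sigma> j then 1 else 0)" for i j
    by (simp add: matrix_mult_perm_matrix_nth[OF \<sigma>]) (simp add: perm_matrix_def)
  moreover have "\<sigma> i = \<sigma> j \<longleftrightarrow> i = j" for i j by (metis \<sigma>)
  ultimately show ?thesis by (simp add: vec_eq_iff mat_def)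
qed

lemma isotropic_mat_mult_reflect_ones_eq_self_iff:
  "isotropic_mat r1 r2 ** reflect_ones = (isotropic_mat r1 r2 :: real^'h::finite^'h)
     \<longleftrightarrow> r1 + real CARD('h) * r2 = 0"
  by (simp only: matrix_mult_reflect_ones_eq_self_iff row_sum_isotropic_mat) simp

lemma isotropic_mat_mult_transposition_eq_self_iff:
  fixes i j :: "'h::finite"
  assumes "i \<noteq> j"
  shows "isotropic_mat r1 r2 ** perm_matrix (Transposition.transpose i j) = (isotropic_mat r1 r2 :: real^'h^'h)
     \<longleftrightarrow> r1 = 0"
proof
  assume "isotropic_mat r1 r2 ** perm_matrix (Transposition.transpose i j) = (isotropic_mat r1 r2 :: real^'h^'h)"
  then have "(isotropic_mat r1 r2 ** perm_matrix (Transposition.transpose i j)) $ i $ i = (isotropic_mat r1 r2 :: real^'h^'h) $ i $ i"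
    by simp
  with assms show "r1 = 0" by (simp add: matrix_mult_perm_matrix_nth)
qed (simp add: vec_eq_iff matrix_mult_perm_matrix_nth)

lemma continuous_nonvanishing_pos:
  fixes f :: "real \<Rightarrow> real"
  assumes "continuous_on {0..t1} f" "f 0 > 0" "\<And>u. u \<in> {0..t1} \<Longrightarrow> f u \<noteq> 0"
    and t: "t \<in> {0..t1}"
  shows "f t > 0"
proof (rule ccontr)
  assume "\<not> f t > 0"
  moreover have "continuous_on {0..t} f" using assms(1) t by (auto intro: continuous_on_subset)
  ultimately obtain u where "0 \<le> u" "u \<le> t" "f u = 0"
    using IVT2'[of f t 0 0] assms(2) t by auto
  with assms(3)[of u] t show False by auto
qed

lemma isotropic_path_invariant_pos:
  fixes R :: "real \<Rightarrow> real^'h::finite^'h" and f :: "real^'h^'h \<Rightarrow> real"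
  assumes iso: "\<And>u. u \<in> {0..t1} \<Longrightarrow> \<exists>r1 r2. R u = isotropic_mat r1 r2"
    and fixed: "\<And>u. u \<in> {0..t1} \<Longrightarrow> R u ** Q = R u \<Longrightarrow> R 0 ** Q = R 0"
    and zero_iff: "\<And>r1 r2. f (isotropic_mat r1 r2) = 0 \<longleftrightarrow> isotropic_mat r1 r2 ** Q = isotropic_mat r1 r2"
    and cont: "continuous_on {0..t1} (\<lambda>u. f (R u))" and pos: "f (R 0) > 0"
    and t: "t \<in> {0..t1}"
  shows "f (R t) > 0"
proof (rule continuous_nonvanishing_pos[OF cont pos _ t])
  fix u assume u: "u \<in> {0..t1}"
  have zero_iff': "f (R s) = 0 \<longleftrightarrow> R s ** Q = R s" if "s \<in> {0..t1}" for s
    using iso[OF that] zero_iff by auto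
  show "f (R u) \<noteq> 0"
  proof
    assume "f (R u) = 0"
    then have "R 0 ** Q = R 0" using fixed[OF u] zero_iff'[OF u] by simp
    with pos zero_iff'[of 0] t show False by simp
  qed
qed

lemma isotropic_path_positive:
  fixes R :: "real \<Rightarrow> real^'h::finite^'h"
  assumes cont: "continuous_on {0..t1} R"
    and iso: "\<And>u. u \<in> {0..t1} \<Longrightarrow> \<exists>r1 r2. R u = isotropic_mat r1 r2"
    and fixed: "\<And>Q u. transpose Q = Q \<Longrightarrow> Q ** Q = mat 1 \<Longrightarrow> u \<in> {0..t1} \<Longrightarrow> R u ** Q = R u
                  \<Longrightarrow> R 0 ** Q = R 0"
    and R0: "R 0 = isotropic_mat r1 r2" "r1 > 0" "r1 + real CARD('h) * r2 > 0"
    and t: "t \<in> {0..t1}"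
  shows "\<exists>r1 r2. r1 > 0 \<and> r1 + real CARD('h) * r2 > 0 \<and> R t = isotropic_mat r1 r2"
proof -
  obtain i0 :: 'h where True by simp
  obtain a c where Rt: "R t = isotropic_mat a c" using iso[OF t] by blast
  \<comment> \<open>the eigenvalue \<open>r\<^sub>1 + H r\<^sub>2\<close> of \<open>R u\<close>, read off as a row sum\<close>
  have "(\<Sum>k\<in>UNIV. R t $ i0 $ k) > 0"
  proof (rule isotropic_path_invariant_pos[where f = "\<lambda>r. \<Sum>k\<in>UNIV. r $ i0 $ k" and R = R,
        OF iso fixed[OF transpose_reflect_ones reflect_ones_involutory] _ _ _ t])
    show "(\<Sum>k\<in>UNIV. (isotropic_mat r1' r2' :: real^'h^'h) $ i0 $ k) = 0
          \<longleftrightarrow> (isotropic_mat r1' r2' :: real^'h^'h) ** reflect_ones = isotropic_mat r1' r2'" for r1' r2'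
      by (simp add: row_sum_isotropic_mat isotropic_mat_mult_reflect_ones_eq_self_iff del: isotropic_mat_nth)
  qed (use cont R0 in \<open>auto intro!: continuous_intros simp: row_sum_isotropic_mat simp del: isotropic_mat_nth\<close>)
  then have eig2: "a + real CARD('h) * c > 0"
    by (simp add: Rt row_sum_isotropic_mat del: isotropic_mat_nth)
  show ?thesis
  proof (cases "\<exists>j0. j0 \<noteq> i0")
    case True
    then obtain j0 where j0: "i0 \<noteq> j0" by metis
    let ?P = "perm_matrix (Transposition.transpose i0 j0)"
    \<comment> \<open>the eigenvalue \<open>r\<^sub>1\<close> of \<open>R u\<close>, read off as a difference of entries\<close>
    have "R t $ i0 $ i0 - R t $ i0 $ j0 > 0"
    proof (rule isotropic_path_invariant_pos[where f = "\<lambda>r. r $ i0 $ i0 - r $ i0 $ j0" and R = R,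
          OF iso fixed[OF transpose_perm_matrix[OF transpose_involutory]
          perm_matrix_involutory[OF transpose_involutory]] _ _ _ t])
      show "(isotropic_mat r1' r2' :: real^'h^'h) $ i0 $ i0 - isotropic_mat r1' r2' $ i0 $ j0 = 0
            \<longleftrightarrow> isotropic_mat r1' r2' ** ?P = isotropic_mat r1' r2'" for r1' r2'
        using j0 by (simp add: isotropic_mat_mult_transposition_eq_self_iff)
    qed (use cont R0 j0 in \<open>auto intro!: continuous_intros\<close>)
    with eig2 Rt j0 show ?thesis by auto
  next
    case False
    then have single: "UNIV = {i0}" by auto
    have "R t = isotropic_mat (a + c) 0"
    proof (rule isotropic_mat_eqI)
      fix i j :: 'h
      have "i = j" using single by (metis UNIV_I singletonD)
      then show "R t $ i $ j = (a + c) * (if i = j then 1 else 0) + 0" by (simp add: Rt)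
    qed
    moreover have "CARD('h) = 1" by (simp add: single)
    ultimately have "a + c > 0" "a + c + real CARD('h) * 0 > 0" "R t = isotropic_mat (a + c) 0"
      using eig2 by simp_all
    then show ?thesis by blast
  qed
qed

lemma gradient_flow_head_symmetric:
  fixes G :: "('f::finite, 'h::finite) params \<Rightarrow> ('f, 'h) params" and p :: "real \<Rightarrow> ('f, 'h) params"
  assumes grad: "\<And>x. (Eloss_param P a (L::'l::finite itself) has_derivative (\<lambda>y. G x \<bullet> y)) (at x)"
    and lip: "\<And>x. \<exists>e>0. \<exists>K. K-lipschitz_on (cball x e) G"
    and flow: "\<And>t. t \<in> {0..t1} \<Longrightarrow> (p has_vector_derivative (- G (p t))) (at t within {0..t1})"
    and sym0: "head_symmetric (p 0)"
    and u: "u \<in> {0..t1}"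
  shows "head_symmetric (p u)"
  unfolding head_symmetric_def
proof (intro allI)
  fix i k :: 'h
  have "0 \<in> {0..t1}" using u by simp
  from gradient_flow_reflection_fixed[OF grad lip flow reflection_symmetry_permute_heads this _ u] sym0
  show "permute_heads (Transposition.transpose i k) (p u) = p u"
    by (simp add: head_symmetric_def)
qed

theorem lemma3:
  fixes P :: "(real^'f::finite) measure"
    and a :: activation
    and G :: "(real^'f^'h::finite) \<times> (real^'h^'h) \<times> (real^'h) \<times> real
              \<Rightarrow> (real^'f^'h) \<times> (real^'h^'h) \<times> (real^'h) \<times> real"
    and p :: "real \<Rightarrow> (real^'f^'h) \<times> (real^'h^'h) \<times> (real^'h) \<times> real"
    and t1 :: real
  assumes "prob_space P" and "sets P = sets borel"
    and grad: "\<And>x. (Eloss_param P a TYPE('l::finite) has_derivative (\<lambda>y. G x \<bullet> y)) (at x)"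
    and lip: "\<And>x. \<exists>e>0. \<exists>K. K-lipschitz_on (cball x e) G"
    and flow: "\<And>t. t \<in> {0..t1} \<Longrightarrow> (p has_vector_derivative (- G (p t))) (at t within {0..t1})"
    and init: "(fst (p 0), fst (snd (p 0)), fst (snd (snd (p 0)))) \<in> unspec_manifold"
  shows "\<forall>t\<in>{0..t1}. (fst (p t), fst (snd (p t)), fst (snd (snd (p t)))) \<in> unspec_manifold"
proof
  fix t assume t: "t \<in> {0..t1}"
  have t0: "0 \<in> {0..t1}" using t by simp
  define R where "R u = fst (snd (p u))" for u
  obtain r1 r2 where R0: "R 0 = isotropic_mat r1 r2" "r1 > 0" "r1 + real CARD('h) * r2 > 0"
    using init by (cases "p 0") (auto simp: R_def unspec_manifold_iff)
  have "head_symmetric (p 0)"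
    using init by (cases "p 0") (simp only: head_symmetric_iff unspec_manifold_iff, auto)
  then have sym: "head_symmetric (p u)" if "u \<in> {0..t1}" for u
    using gradient_flow_head_symmetric[OF grad lip flow _ that] by blast
  have "\<exists>r1 r2. r1 > 0 \<and> r1 + real CARD('h) * r2 > 0 \<and> R t = isotropic_mat r1 r2"
  proof (rule isotropic_path_positive[where R = R, OF _ _ _ R0 t])
    have "continuous_on {0..t1} p"
      using flow continuous_on_eq_continuous_within has_vector_derivative_continuous by blast
    then show "continuous_on {0..t1} R" unfolding R_def by (intro continuous_intros)
    show "\<exists>r1 r2. R u = isotropic_mat r1 r2" if "u \<in> {0..t1}" for u
      using sym[OF that] by (cases "p u") (simp add: R_def head_symmetric_iff)
    show "R 0 ** Q = R 0"
      if "transpose Q = Q" "Q ** Q = mat 1" "u \<in> {0..t1}" "R u ** Q = R u" for Q u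
      using gradient_flow_reflection_fixed[OF grad lip flow reflection_symmetry_mult_r_right[OF that(1,2)]
          that(3) _ t0] that(4)
      by (cases "p u", cases "p 0") (simp add: R_def mult_r_right_eq_self_iff)
  qed
  with sym[OF t] show "(fst (p t), fst (snd (p t)), fst (snd (snd (p t)))) \<in> unspec_manifold"
    by (cases "p t") (simp only: head_symmetric_iff unspec_manifold_iff R_def, auto)
qed

end
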